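(* Let $S$ be a state of a $d$-dimensional Hegselmann–Krause system with social network $G=(V,E)$ and confidence bound $\varepsilon>0$, and let $\lambda$ be the length of a longest edge of the influence network. Then $$\sum_{v\in V}|N_v|\,\|m_v\|_2\ \ge\ 2\lambda.$$
   Context: A $d$-dimensional Hegselmann–Krause system has a finite undirected graph $G=(V,E)$ (social network), a confidence bound $\varepsilon>0$, and a state given by positions $x_v\in\mathbb{R}^d$. In a state, $N_v=\{u:\{u,v\}\in E,\ \|x_u-x_v\|_2\le\varepsilon\}\cup\{v\}$ is the influencing neighborhood of $v$, $m_v=\frac{1}{|N_v|}\sum_{u\in N_v}(x_u-x_v)$ is its movement, the influence network is $(V,E_I)$ with $E_I=\{\{u,v\}\in E:\|x_u-x_v\|_2\le\varepsilon\}$, and the length of an edge $\{u,v\}$ is $\|x_u-x_v\|_2$. *)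

theory Defs
  imports "HOL-Analysis.Analysis"
begin

definition graph :: "'v set \<Rightarrow> 'v set set \<Rightarrow> bool" where
  "graph V E \<longleftrightarrow> finite V \<and> (\<forall>e\<in>E. \<exists>u v. e = {u, v} \<and> u \<in> V \<and> v \<in> V \<and> u \<noteq> v)"

definition nbhd :: "'v set set \<Rightarrow> real \<Rightarrow> ('v \<Rightarrow> real^'d) \<Rightarrow> 'v \<Rightarrow> 'v set" where
  "nbhd E \<epsilon> x v = {u. {u, v} \<in> E \<and> norm (x u - x v) \<le> \<epsilon>} \<union> {v}"

definition movement :: "'v set set \<Rightarrow> real \<Rightarrow> ('v \<Rightarrow> real^'d) \<Rightarrow> 'v \<Rightarrow> real^'d" where
  "movement E \<epsilon> x v =
     (1 / real (card (nbhd E \<epsilon> x v))) *\<^sub>R (\<Sum>u\<in>nbhd E \<epsilon> x v. x u - x v)"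

definition influence_edges :: "'v set set \<Rightarrow> real \<Rightarrow> ('v \<Rightarrow> real^'d) \<Rightarrow> 'v set set" where
  "influence_edges E \<epsilon> x = {e \<in> E. \<exists>u v. e = {u, v} \<and> norm (x u - x v) \<le> \<epsilon>}"

definition longest_influence_edge :: "'v set set \<Rightarrow> real \<Rightarrow> ('v \<Rightarrow> real^'d) \<Rightarrow> real" where
  "longest_influence_edge E \<epsilon> x =
     Max {norm (x u - x v) | u v. {u, v} \<in> influence_edges E \<epsilon> x}"

end

theory Submission
  imports Defs
begin

text \<open>Let \<open>{a, b}\<close> be any influence edge, \<open>w\<close> the unit vector from \<open>x\<^sub>a\<close> towards \<open>x\<^sub>b\<close>,
  and \<open>p v = w \<bullet> x\<^sub>v\<close>. Give each agent the sign \<open>s\<^sub>v = 1\<close> if \<open>p v \<le> p a\<close> and \<open>s\<^sub>v = -1\<close>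
  otherwise. By Cauchy-Schwarz, \<open>|N\<^sub>v| \<parallel>m\<^sub>v\<parallel> \<ge> s\<^sub>v \<Sum>\<^sub>u\<^sub>\<in>\<^sub>N\<^sub>v (p u - p v)\<close>. Summing over the
  symmetric influence relation, every pair \<open>{u, v}\<close> contributes \<open>(s\<^sub>v - s\<^sub>u)(p u - p v) \<ge> 0\<close>,
  and the pair \<open>{a, b}\<close>, which crosses the threshold, contributes \<open>2 (p b - p a) = 2 \<parallel>x\<^sub>a - x\<^sub>b\<parallel>\<close>.\<close>

lemma scaled_inner_le_norm:
  fixes w z :: "'a::real_inner"
  assumes "norm w \<le> 1" and "\<bar>c\<bar> \<le> 1"
  shows "c * (w \<bullet> z) \<le> norm z"
proof -
  have "c * (w \<bullet> z) \<le> \<bar>c\<bar> * \<bar>w \<bullet> z\<bar>"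
    by (metis abs_ge_self abs_mult)
  also have "\<dots> \<le> \<bar>w \<bullet> z\<bar>"
    using assms(2) by (simp add: mult_left_le_one_le)
  also have "\<dots> \<le> norm w * norm z"
    by (rule Cauchy_Schwarz_ineq2)
  also have "\<dots> \<le> norm z"
    using assms(1) by (simp add: mult_left_le_one_le)
  finally show ?thesis .
qed

lemma inner_sgn_self: "sgn z \<bullet> z = norm (z :: 'a::real_inner)"
  by (cases "z = 0") (simp_all add: sgn_div_norm power2_norm_eq_inner[symmetric] power2_eq_square)

lemma sum_sym_relation_ge_pair:
  fixes h :: "'a \<times> 'a \<Rightarrow> real"
  assumes "finite R" and "sym R" and "(a, b) \<in> R" and "a \<noteq> b"
    and pairs_nonneg: "\<And>u v. (u, v) \<in> R \<Longrightarrow> h (u, v) + h (v, u) \<ge> 0"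
  shows "h (a, b) + h (b, a) \<le> (\<Sum>q\<in>R. h q)"
proof -
  define g where "g q = h q + h (prod.swap q)" for q
  have "prod.swap ` R = R"
    using \<open>sym R\<close> by (force dest: symD)
  then have "(\<Sum>q\<in>R. h (prod.swap q)) = (\<Sum>q\<in>R. h q)"
    using sum.reindex[of prod.swap R h] by simp
  then have sum_g: "(\<Sum>q\<in>R. g q) = 2 * (\<Sum>q\<in>R. h q)"
    by (simp add: g_def sum.distrib)
  have "2 * (h (a, b) + h (b, a)) = (\<Sum>q\<in>{(a, b), (b, a)}. g q)"
    using \<open>a \<noteq> b\<close> by (simp add: g_def)
  also have "\<dots> \<le> (\<Sum>q\<in>R. g q)"
    using assms by (intro sum_mono2) (auto simp: g_def dest: symD)
  finally show ?thesis
    unfolding sum_g by simp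
qed

lemma sum_norm_local_sums_ge_edge:
  fixes y :: "'v \<Rightarrow> 'a::real_inner"
  assumes "finite V" and N_subset: "\<And>v. v \<in> V \<Longrightarrow> N v \<subseteq> V"
    and N_sym: "\<And>u v. u \<in> N v \<longleftrightarrow> v \<in> N u"
    and "a \<in> V" and "b \<in> N a"
  shows "2 * norm (y a - y b) \<le> (\<Sum>v\<in>V. norm (\<Sum>u\<in>N v. y u - y v))"
proof (cases "a = b")
  case True
  then show ?thesis
    by (simp add: sum_nonneg)
next
  case False
  define p where "p v = sgn (y b - y a) \<bullet> y v" for v
  define s :: "'v \<Rightarrow> real" where "s v = (if p v \<le> p a then 1 else -1)" for v
  define h where "h = (\<lambda>(v, u). s v * (p u - p v))"
  define R where "R = Sigma V N"
  have "finite R"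
    unfolding R_def using \<open>finite V\<close> N_subset by (auto intro: finite_subset)
  have "sym R"
    unfolding R_def using N_subset N_sym by (auto intro!: symI)
  have p_ab: "p b - p a = norm (y a - y b)"
    unfolding p_def by (simp add: inner_diff_right[symmetric] inner_sgn_self norm_minus_commute)
  have "p a \<le> p b"
    using p_ab norm_ge_zero[of "y a - y b"] by linarith
  then have "2 * norm (y a - y b) = h (a, b) + h (b, a)"
    unfolding p_ab[symmetric] h_def s_def by (cases "p b \<le> p a") auto
  also have "\<dots> \<le> (\<Sum>q\<in>R. h q)"
  proof (rule sum_sym_relation_ge_pair[OF \<open>finite R\<close> \<open>sym R\<close> _ False])
    show "(a, b) \<in> R"
      unfolding R_def using \<open>a \<in> V\<close> \<open>b \<in> N a\<close> by simp
    show "h (u, v) + h (v, u) \<ge> 0" for u v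
      unfolding h_def s_def by (auto simp: algebra_simps)
  qed
  also have "(\<Sum>q\<in>R. h q) = (\<Sum>v\<in>V. s v * (sgn (y b - y a) \<bullet> (\<Sum>u\<in>N v. y u - y v)))"
    unfolding R_def h_def p_def using \<open>finite V\<close> N_subset
    by (subst sum.Sigma[symmetric])
      (auto intro: finite_subset simp: sum_distrib_left inner_sum_right inner_diff_right)
  also have "\<dots> \<le> (\<Sum>v\<in>V. norm (\<Sum>u\<in>N v. y u - y v))"
    by (intro sum_mono scaled_inner_le_norm) (auto simp: norm_sgn s_def)
  finally show ?thesis .
qed

lemma graph_finite: "graph V E \<Longrightarrow> finite V"
  unfolding graph_def by blast

lemma graph_edge_vertices:
  assumes "graph V E" and "{u, v} \<in> E"
  shows "u \<in> V"
  using assms unfolding graph_def by (auto simp: doubleton_eq_iff)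

lemma nbhd_subset:
  assumes "graph V E" and "v \<in> V"
  shows "nbhd E \<epsilon> x v \<subseteq> V"
  using assms graph_edge_vertices[OF \<open>graph V E\<close>] unfolding nbhd_def by auto

lemma nbhd_sym: "u \<in> nbhd E \<epsilon> x v \<longleftrightarrow> v \<in> nbhd E \<epsilon> x u"
  unfolding nbhd_def by (auto simp: insert_commute norm_minus_commute)

lemma influence_edge_in_nbhd:
  assumes "{a, b} \<in> influence_edges E \<epsilon> x"
  shows "b \<in> nbhd E \<epsilon> x a"
  using assms unfolding influence_edges_def nbhd_def
  by (auto simp: doubleton_eq_iff insert_commute norm_minus_commute)

text \<open>For an infinite neighbourhood both sides are \<open>0\<close>, as \<open>card\<close> and the sum then vanish.\<close>

lemma card_nbhd_mult_norm_movement: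
  "real (card (nbhd E \<epsilon> x v)) * norm (movement E \<epsilon> x v) = norm (\<Sum>u\<in>nbhd E \<epsilon> x v. x u - x v)"
proof (cases "finite (nbhd E \<epsilon> x v)")
  case True
  moreover have "v \<in> nbhd E \<epsilon> x v"
    unfolding nbhd_def by simp
  ultimately have "card (nbhd E \<epsilon> x v) > 0"
    by (auto simp: card_gt_0_iff)
  then show ?thesis
    unfolding movement_def by simp
next
  case False
  then show ?thesis
    unfolding movement_def by simp
qed

lemma longest_influence_edge_attained:
  assumes "graph V E" and "influence_edges E \<epsilon> x \<noteq> {}"
  obtains a b where "{a, b} \<in> influence_edges E \<epsilon> x"
    and "longest_influence_edge E \<epsilon> x = norm (x a - x b)"
proof -
  define A where "A = {norm (x u - x v) | u v. {u, v} \<in> influence_edges E \<epsilon> x}"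
  have "A \<subseteq> (\<lambda>(u, v). norm (x u - x v)) ` (V \<times> V)"
  proof
    fix r
    assume "r \<in> A"
    then obtain u v where "r = norm (x u - x v)" and "{u, v} \<in> E" and "{v, u} \<in> E"
      unfolding A_def influence_edges_def by (auto simp: insert_commute)
    then show "r \<in> (\<lambda>(u, v). norm (x u - x v)) ` (V \<times> V)"
      using graph_edge_vertices[OF \<open>graph V E\<close>] by force
  qed
  then have "finite A"
    using graph_finite[OF \<open>graph V E\<close>] by (meson finite_SigmaI finite_imageI finite_subset)
  moreover have "A \<noteq> {}"
    using assms(2) unfolding A_def influence_edges_def by blast
  ultimately have "Max A \<in> A"
    by (rule Max_in)
  then show ?thesis
    using that unfolding A_def longest_influence_edge_def by blast
qed

theorem corollary1:
  fixes V :: "'v set" and E :: "'v set set" and \<epsilon> :: real and x :: "'v \<Rightarrow> real^'d"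
  assumes "graph V E" and "\<epsilon> > 0"
    and "influence_edges E \<epsilon> x \<noteq> {}"
  shows "(\<Sum>v\<in>V. real (card (nbhd E \<epsilon> x v)) * norm (movement E \<epsilon> x v))
           \<ge> 2 * longest_influence_edge E \<epsilon> x"
proof -
  obtain a b where ab: "{a, b} \<in> influence_edges E \<epsilon> x"
    and longest: "longest_influence_edge E \<epsilon> x = norm (x a - x b)"
    using longest_influence_edge_attained[OF assms(1,3)] .
  have "a \<in> V"
    using ab graph_edge_vertices[OF assms(1)] unfolding influence_edges_def by blast
  have "2 * norm (x a - x b) \<le> (\<Sum>v\<in>V. norm (\<Sum>u\<in>nbhd E \<epsilon> x v. x u - x v))"
    by (rule sum_norm_local_sums_ge_edge[OF graph_finite[OF assms(1)]
          nbhd_subset[OF assms(1)] nbhd_sym \<open>a \<in> V\<close> influence_edge_in_nbhd[OF ab]])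
  then show ?thesis
    by (simp add: longest card_nbhd_mult_norm_movement)
qed

end
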